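(* Let $G$ be split reductive with root system of type $C_r$, $r\geqslant2$, with simple roots $\alpha_1,\dots,\alpha_r$ in Bourbaki labelling ($\alpha_r$ long), and let $\widetilde G$ be an $n$-fold Brylinski--Deligne cover associated with a Weyl-invariant quadratic form $Q$. Partition $\Phi_+=\Phi_{+,I}\sqcup\Phi_{+,II}\sqcup\Phi_{+,III}$ with $\Phi_{+,I}=\{\sum_{i\leqslant k<j}\alpha_k:1\leqslant i<j\leqslant r\}$, $\Phi_{+,II}=\{\sum_{i\leqslant k<j}\alpha_k+2\sum_{j\leqslant k<r}\alpha_k+\alpha_r:1\leqslant i<j\leqslant r\}$, $\Phi_{+,III}=\{2\sum_{i\leqslant k<r}\alpha_k+\alpha_r:1\leqslant i\leqslant r\}$, and $\Phi^\vee_+=\Phi^\vee_{+,I}\sqcup\Phi^\vee_{+,II}\sqcup\Phi^\vee_{+,III}$ with $\Phi^\vee_{+,I}=\{\sum_{i\leqslant k\leqslant r}\alpha^\vee_k:1\leqslant i\leqslant r\}$, $\Phi^\vee_{+,II}=\{\sum_{i\leqslant k<j}\alpha_k^\vee:1\leqslant i<j\leqslant r\}$, $\Phi^\vee_{+,III}=\{\sum_{i\leqslant k<j}\alpha^\vee_k+2\sum_{j\leqslant k\leqslant r}\alpha^\vee_k:1\leqslant i<j\leqslant r\}$. If $2\tilde n_{\alpha_i}=\tilde n_{\alpha_r}$ for all $1\leqslant i<r$, then necessarily $\tilde n_{\alpha_i}=n_{\alpha_i}$ for all $1\leqslant i\leqslant r$ and $$f_X(\Phi^\vee_{+,I})=f_Y(\Phi_{+,III}),\quad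 f_X(\Phi^\vee_{+,II})=f_Y(\Phi_{+,I}),\quad f_X(\Phi^\vee_{+,III})=f_Y(\Phi_{+,II});$$ in this case $f_X(\Phi^\vee_+)=\frac{[1,2r-1]}{2n_{\alpha_1}}\cup\frac{[2,2r-2]}{n_{\alpha_1}}=f_Y(\Phi_+)$. If $\tilde n_\alpha$ is constant on $\alpha\in\Delta$, then $f_X(\Phi^\vee_+)=\frac{1}{\tilde n_\alpha}[1,2r-1]=f_Y(\Phi_+)$.
   Context: $[a,b]$ denotes $\{a,a+1,\dots,b\}$ and $\frac{S}{m}=\{s/m:s\in S\}$. Notation: $\omega_\alpha$ fundamental weights, $\omega^\vee_\alpha$ fundamental coweights, $\rho^\vee=\sum_{\alpha\in\Delta}\omega_\alpha^\vee$. $B_Q(y,z)=Q(y+z)-Q(y)-Q(z)$, $Y_{Q,n}=\{y\in Y:B_Q(y,z)\in n\mathbf Z\ \forall z\in Y\}$, $n_\alpha=n/\gcd(n,Q(\alpha^\vee))$, and $\tilde n_\alpha\in\{n_\alpha,n_\alpha/2\}$ ($\alpha\in\Phi$) defined by $\mathbf Z\alpha^\vee\cap Y_{Q,n}=\mathbf Z\tilde n_\alpha\alpha^\vee$. $f_X:\Phi_+^\vee\to\mathbf Q$, $f_X(\beta^\vee)=\sum_{\alpha\in\Delta}\langle\omega_\alpha/\tilde n_\alpha,\beta^\vee\rangle$; $f_Y:\Phi_+\to\mathbf Q$, $f_Y(\beta)=\langle\rho^\vee,\beta\rangle/\tilde n_\beta$. *)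

theory Defs
  imports "HOL-Analysis.Analysis"
begin

text \<open>Cocharacter lattice Y = int^'d; characters X = Hom(Y,Z) = int^'d with the
  standard pairing.\<close>

definition pairing :: "int ^ 'd \<Rightarrow> int ^ 'd \<Rightarrow> int" where
  "pairing x y = (\<Sum>m\<in>UNIV. x $ m * y $ m)"

definition BQ :: "(int ^ 'd \<Rightarrow> int) \<Rightarrow> int ^ 'd \<Rightarrow> int ^ 'd \<Rightarrow> int" where
  "BQ Q y z = Q (y + z) - Q y - Q z"

definition quadratic_form :: "(int ^ 'd \<Rightarrow> int) \<Rightarrow> bool" where
  "quadratic_form Q \<longleftrightarrow> (\<forall>k y. Q (k *s y) = k ^ 2 * Q y)
      \<and> (\<forall>x y z. BQ Q (x + y) z = BQ Q x z + BQ Q y z)"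

definition YQn :: "(int ^ 'd \<Rightarrow> int) \<Rightarrow> nat \<Rightarrow> (int ^ 'd) set" where
  "YQn Q n = {y. \<forall>z. int n dvd BQ Q y z}"

definition n_cor :: "(int ^ 'd \<Rightarrow> int) \<Rightarrow> nat \<Rightarrow> int ^ 'd \<Rightarrow> nat" where
  "n_cor Q n c = nat (int n div gcd (int n) (Q c))"

definition tn_cor :: "(int ^ 'd \<Rightarrow> int) \<Rightarrow> nat \<Rightarrow> int ^ 'd \<Rightarrow> nat" where
  "tn_cor Q n c = (THE k::nat. k > 0 \<and>
      range (\<lambda>m::int. m *s c) \<inter> YQn Q n = range (\<lambda>m::int. (m * int k) *s c))"

text \<open>Cartan integers <alpha_i, alpha_j^vee> of type C_r, Bourbaki labelling, alpha_r long.\<close>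
definition cartan_C :: "nat \<Rightarrow> nat \<Rightarrow> nat \<Rightarrow> int" where
  "cartan_C r i j =
     (if i = j then 2
      else if i = r \<and> j = r - 1 then -2
      else if j = i + 1 \<or> i = j + 1 then -1
      else 0)"

text \<open>Simple roots rt 1..r in X and simple coroots cor 1..r in Y forming a root datum of
  type C_r, and Q a Weyl-invariant integer quadratic form on Y.\<close>
definition root_datum_C :: "nat \<Rightarrow> (nat \<Rightarrow> int ^ 'd) \<Rightarrow> (nat \<Rightarrow> int ^ 'd) \<Rightarrow> bool" where
  "root_datum_C r rt cor \<longleftrightarrow>
     (\<forall>i\<in>{1..r}. \<forall>j\<in>{1..r}. pairing (rt i) (cor j) = cartan_C r i j)"

definition weyl_invariant :: "nat \<Rightarrow> (nat \<Rightarrow> int ^ 'd) \<Rightarrow> (nat \<Rightarrow> int ^ 'd) \<Rightarrow> (int ^ 'd \<Rightarrow> int) \<Rightarrow> bool" where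
  "weyl_invariant r rt cor Q \<longleftrightarrow>
     (\<forall>i\<in>{1..r}. \<forall>y. Q (y - pairing (rt i) y *s cor i) = Q y)"

text \<open>Positive roots (coefficient vectors w.r.t. alpha_1..alpha_r) and positive coroots
  (coefficient vectors w.r.t. alpha_1^vee..alpha_r^vee).\<close>
definition PhiI :: "nat \<Rightarrow> (nat \<Rightarrow> int) set" where
  "PhiI r = {(\<lambda>k. if i \<le> k \<and> k < j then 1 else 0) | i j. 1 \<le> i \<and> i < j \<and> j \<le> r}"

definition PhiII :: "nat \<Rightarrow> (nat \<Rightarrow> int) set" where
  "PhiII r = {(\<lambda>k. if i \<le> k \<and> k < j then 1 else if j \<le> k \<and> k < r then 2
                  else if k = r then 1 else 0) | i j. 1 \<le> i \<and> i < j \<and> j \<le> r}"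

definition PhiIII :: "nat \<Rightarrow> (nat \<Rightarrow> int) set" where
  "PhiIII r = {(\<lambda>k. if i \<le> k \<and> k < r then 2 else if k = r then 1 else 0) | i. 1 \<le> i \<and> i \<le> r}"

definition PhiPos :: "nat \<Rightarrow> (nat \<Rightarrow> int) set" where
  "PhiPos r = PhiI r \<union> PhiII r \<union> PhiIII r"

definition CoPhiI :: "nat \<Rightarrow> (nat \<Rightarrow> int) set" where
  "CoPhiI r = {(\<lambda>k. if i \<le> k \<and> k \<le> r then 1 else 0) | i. 1 \<le> i \<and> i \<le> r}"

definition CoPhiII :: "nat \<Rightarrow> (nat \<Rightarrow> int) set" where
  "CoPhiII r = {(\<lambda>k. if i \<le> k \<and> k < j then 1 else 0) | i j. 1 \<le> i \<and> i < j \<and> j \<le> r}"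

definition CoPhiIII :: "nat \<Rightarrow> (nat \<Rightarrow> int) set" where
  "CoPhiIII r = {(\<lambda>k. if i \<le> k \<and> k < j then 1 else if j \<le> k \<and> k \<le> r then 2 else 0)
                 | i j. 1 \<le> i \<and> i < j \<and> j \<le> r}"

definition CoPhiPos :: "nat \<Rightarrow> (nat \<Rightarrow> int) set" where
  "CoPhiPos r = CoPhiI r \<union> CoPhiII r \<union> CoPhiIII r"

text \<open>Coroot beta^vee = 2 beta/(beta,beta) of a positive root of C_r, in coordinates:
  coefficient k is beta_k (alpha_k,alpha_k)/(beta,beta); long roots are those in PhiIII.\<close>
definition coroot_C :: "nat \<Rightarrow> (nat \<Rightarrow> int) \<Rightarrow> (nat \<Rightarrow> int)" where
  "coroot_C r \<beta> = (\<lambda>k. if 1 \<le> k \<and> k \<le> r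
       then (\<beta> k * (if k = r then 2 else 1)) div (if \<beta> \<in> PhiIII r then 2 else 1) else 0)"

definition corvec :: "nat \<Rightarrow> (nat \<Rightarrow> int ^ 'd) \<Rightarrow> (nat \<Rightarrow> int) \<Rightarrow> int ^ 'd" where
  "corvec r cor c = (\<Sum>k\<in>{1..r}. c k *s cor k)"

text \<open>f_X(beta^vee) = sum_alpha <omega_alpha / tilde n_alpha, beta^vee>.\<close>
definition fX :: "(int ^ 'd \<Rightarrow> int) \<Rightarrow> nat \<Rightarrow> nat \<Rightarrow> (nat \<Rightarrow> int ^ 'd) \<Rightarrow> (nat \<Rightarrow> int) \<Rightarrow> rat" where
  "fX Q n r cor c = (\<Sum>i\<in>{1..r}. of_int (c i) / of_nat (tn_cor Q n (cor i)))"

text \<open>f_Y(beta) = <rho^vee, beta> / tilde n_beta.\<close>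
definition fY :: "(int ^ 'd \<Rightarrow> int) \<Rightarrow> nat \<Rightarrow> nat \<Rightarrow> (nat \<Rightarrow> int ^ 'd) \<Rightarrow> (nat \<Rightarrow> int) \<Rightarrow> rat" where
  "fY Q n r cor \<beta> = of_int (\<Sum>k\<in>{1..r}. \<beta> k)
       / of_nat (tn_cor Q n (corvec r cor (coroot_C r \<beta>)))"

end

theory Submission
  imports Defs
begin

text \<open>Invariance of \<open>Q\<close> under the simple reflection of \<open>\<alpha>\<close> gives
  \<open>B\<^sub>Q(\<alpha>\<^sup>\<or>, y) = Q(\<alpha>\<^sup>\<or>) \<langle>\<alpha>, y\<rangle>\<close>; comparing \<open>B\<^sub>Q(\<alpha>\<^sub>i\<^sup>\<or>, \<alpha>\<^sub>j\<^sup>\<or>)\<close> with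
  \<open>B\<^sub>Q(\<alpha>\<^sub>j\<^sup>\<or>, \<alpha>\<^sub>i\<^sup>\<or>)\<close> along the Dynkin diagram yields \<open>Q(\<alpha>\<^sub>i\<^sup>\<or>) = 2q\<close> for \<open>i < r\<close>,
  where \<open>q = Q(\<alpha>\<^sub>r\<^sup>\<or>)\<close>. Hence \<open>B\<^sub>Q(\<beta>\<^sup>\<or>, -)\<close> is \<open>2q \<langle>\<beta>, -\<rangle>\<close> for a short root and
  \<open>q \<langle>\<beta>, -\<rangle>\<close> for a long one. When \<open>B\<^sub>Q(y, -) = K f\<close> with \<open>f\<close> primitive, the multiples
  of \<open>y\<close> lying in \<open>Y\<^sub>Q\<^sub>,\<^sub>n\<close> are those of \<open>n / gcd(n, K) \<cdot> y\<close>. For a short root \<open>\<langle>\<beta>, -\<rangle>\<close>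
  takes the value \<open>\<plusminus>1\<close> on a simple coroot, so \<open>tn_cor\<close> is \<open>n / gcd(n, 2q)\<close> on all short
  roots; for a long root it is congruent to \<open>\<langle>\<alpha>\<^sub>r, -\<rangle>\<close> modulo 2, so all long roots share the
  value of \<open>\<alpha>\<^sub>r\<close>, which is \<open>n / gcd(n, q)\<close> or \<open>n / gcd(n, 2q)\<close>. Now \<open>f\<^sub>X\<close> and \<open>f\<^sub>Y\<close> are
  explicit in the heights of the (co)roots, and the claims reduce to describing the sets of
  heights as integer intervals. If \<open>tn_cor\<close> of \<open>\<alpha>\<^sub>r\<close> is twice that of \<open>\<alpha>\<^sub>1\<close>, it cannot be
  \<open>n / gcd(n, 2q)\<close>, so it is \<open>n\<^sub>\<alpha>\<^sub>r\<close>.\<close>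

section \<open>The bilinear form of a quadratic form\<close>

lemma BQ_commute: "BQ Q y z = BQ Q z y"
  unfolding BQ_def by (simp add: add.commute)

context
  fixes Q :: "int ^ 'd \<Rightarrow> int"
  assumes quadratic: "quadratic_form Q"
begin

lemma BQ_add_left: "BQ Q (x + y) z = BQ Q x z + BQ Q y z"
  using quadratic unfolding quadratic_form_def by blast

lemma BQ_zero_left: "BQ Q 0 z = 0"
  using BQ_add_left[of 0 0 z] by simp

lemma BQ_smult_left: "BQ Q (m *s y) z = m * BQ Q y z"
proof (induction m rule: int_induct[where k = 0])
  case base
  show ?case by (simp add: BQ_zero_left)
next
  case (step1 i)
  have "(i + 1) *s y = i *s y + y"
    by (simp add: vector_sadd_rdistrib)
  then show ?case
    using step1 by (simp add: BQ_add_left distrib_right)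
next
  case (step2 i)
  define j where "j = i - 1"
  have i_eq: "i = j + 1"
    by (simp add: j_def)
  have "i *s y = j *s y + y"
    by (simp add: i_eq vector_sadd_rdistrib)
  then have "BQ Q (i *s y) z = BQ Q (j *s y) z + BQ Q y z"
    by (simp add: BQ_add_left)
  then show ?case
    using step2 unfolding j_def[symmetric] by (simp add: i_eq distrib_right)
qed

lemma BQ_smult_right: "BQ Q z (m *s y) = m * BQ Q z y"
  using BQ_smult_left[of m y z] by (simp add: BQ_commute)

lemma BQ_sum_left: "finite S \<Longrightarrow> BQ Q (\<Sum>k\<in>S. g k) z = (\<Sum>k\<in>S. BQ Q (g k) z)"
  by (induction S rule: finite_induct) (simp_all add: BQ_zero_left BQ_add_left)

lemma BQ_diag: "BQ Q y y = 2 * Q y"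
proof -
  have "Q ((2::int) *s y) = 4 * Q y"
    using quadratic unfolding quadratic_form_def by simp
  moreover have "(2::int) *s y = y + y"
    by (simp add: vec_eq_iff)
  ultimately show ?thesis
    unfolding BQ_def by simp
qed

end

lemma pairing_commute: "pairing x y = pairing y x"
  unfolding pairing_def by (simp add: mult.commute)

lemma pairing_add_right: "pairing x (y + z) = pairing x y + pairing x z"
  unfolding pairing_def by (simp add: distrib_left sum.distrib)

lemma pairing_smult_right: "pairing x (m *s y) = m * pairing x y"
  unfolding pairing_def by (simp add: sum_distrib_left mult.left_commute)

lemma pairing_zero_right: "pairing x 0 = 0"
  unfolding pairing_def by simp

lemma pairing_sum_right: "finite S \<Longrightarrow> pairing x (\<Sum>k\<in>S. g k) = (\<Sum>k\<in>S. pairing x (g k))"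
  by (induction S rule: finite_induct) (simp_all add: pairing_zero_right pairing_add_right)

lemma pairing_smult_left: "pairing (m *s x) y = m * pairing x y"
  using pairing_smult_right[of y m x] by (simp add: pairing_commute)

lemma pairing_sum_left: "finite S \<Longrightarrow> pairing (\<Sum>k\<in>S. g k) y = (\<Sum>k\<in>S. pairing (g k) y)"
  using pairing_sum_right[of S y g] by (simp add: pairing_commute)

text \<open>Invariance under the reflection \<open>y \<mapsto> y - \<langle>a, y\<rangle> c\<close> with \<open>\<langle>a, c\<rangle> = 2\<close> gives
  \<open>\<langle>a, w\<rangle> B(c, w) = \<langle>a, w\<rangle>\<^sup>2 Q(c)\<close>; this determines \<open>B(c, w)\<close> unless \<open>\<langle>a, w\<rangle> = 0\<close>, and
  that case is reduced to the other one by passing from \<open>w\<close> to \<open>w + c\<close>.\<close>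
lemma reflection_invariant_BQ:
  assumes quadratic: "quadratic_form Q"
    and invariant: "\<And>y. Q (y - pairing a y *s c) = Q y"
    and pairing_a_c: "pairing a c = 2"
  shows "BQ Q c z = pairing a z * Q c"
proof -
  have key: "pairing a w * BQ Q c w = (pairing a w)\<^sup>2 * Q c" for w
  proof -
    define t where "t = pairing a w"
    have "w + (- t) *s c = w - t *s c"
      by (simp add: vec_eq_iff)
    then have "Q w = Q (w + (- t) *s c)"
      using invariant[of w] by (simp add: t_def)
    also have "\<dots> = Q w + (- t)\<^sup>2 * Q c + BQ Q w ((- t) *s c)"
      using quadratic unfolding BQ_def quadratic_form_def by simp
    also have "BQ Q w ((- t) *s c) = - t * BQ Q c w"
      by (simp add: BQ_smult_right[OF quadratic] BQ_commute[of Q w c])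
    finally show ?thesis
      unfolding t_def by (simp add: power2_eq_square algebra_simps)
  qed
  show ?thesis
  proof (cases "pairing a z = 0")
    case False
    then show ?thesis
      using key[of z] by (simp add: power2_eq_square)
  next
    case True
    have "BQ Q c (z + c) = BQ Q c z + 2 * Q c"
      using BQ_add_left[OF quadratic, of z c c] BQ_diag[OF quadratic, of c]
      by (simp add: BQ_commute)
    moreover have "2 * BQ Q c (z + c) = 4 * Q c"
      using key[of "z + c"] True by (simp add: pairing_add_right pairing_a_c)
    ultimately show ?thesis
      using True by simp
  qed
qed

section \<open>Multiples of a vector lying in \<open>Y\<^sub>Q\<^sub>,\<^sub>n\<close>\<close>

lemma vector_mul_rcancel_idom:
  fixes x :: "'a::idom ^ 'n"
  assumes "x \<noteq> 0" "a *s x = b *s x"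
  shows "a = b"
proof -
  obtain i where "x $ i \<noteq> 0"
    using assms(1) by (metis vec_eq_iff zero_index)
  moreover have "a * x $ i = b * x $ i"
    using assms(2) by (metis vector_smult_component)
  ultimately show ?thesis
    by simp
qed

lemma tn_cor_eqI:
  fixes y :: "int ^ 'd"
  assumes y: "y \<noteq> 0" and N: "N > 0"
    and mem_iff: "\<And>m::int. m *s y \<in> YQn Q n \<longleftrightarrow> int N dvd m"
  shows "tn_cor Q n y = N"
  unfolding tn_cor_def
proof (rule the_equality)
  show "0 < N \<and> range (\<lambda>m. m *s y) \<inter> YQn Q n = range (\<lambda>m. (m * int N) *s y)"
    using N mem_iff by (auto elim!: dvdE simp: mult.commute)
next
  fix k
  assume k: "0 < k \<and> range (\<lambda>m. m *s y) \<inter> YQn Q n = range (\<lambda>m. (m * int k) *s y)"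
  have "int N *s y \<in> range (\<lambda>m. (m * int k) *s y)"
    using k mem_iff by auto
  then obtain m where "int N *s y = (m * int k) *s y"
    by blast
  then have "int N = m * int k"
    by (rule vector_mul_rcancel_idom[OF y])
  then have "int k dvd int N"
    by simp
  moreover have "(1 * int k) *s y \<in> range (\<lambda>m. m *s y) \<inter> YQn Q n"
    unfolding conjunct2[OF k] by (rule rangeI)
  then have "int N dvd int k"
    using mem_iff by simp
  ultimately show "k = N"
    by (simp add: dvd_antisym)
qed

lemma smult_mem_YQn_iff:
  "quadratic_form Q \<Longrightarrow> m *s y \<in> YQn Q n \<longleftrightarrow> (\<forall>z. int n dvd m * BQ Q y z)"
  unfolding YQn_def by (simp add: BQ_smult_left)

lemma dvd_mult_iff_div_gcd_dvd:
  fixes n K m :: int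
  assumes "n > 0"
  shows "n dvd m * K \<longleftrightarrow> n div gcd n K dvd m"
proof -
  define g where "g = gcd n K"
  have "g > 0"
    using assms by (simp add: g_def)
  have "coprime (n div g) (K div g)"
    using div_gcd_coprime[of n K] assms by (simp add: g_def)
  have "n dvd m * K \<longleftrightarrow> g * (n div g) dvd g * (m * (K div g))"
    by (simp add: g_def mult.left_commute)
  also have "\<dots> \<longleftrightarrow> n div g dvd m * (K div g)"
    using \<open>g > 0\<close> by simp
  also have "\<dots> \<longleftrightarrow> n div g dvd m"
    using \<open>coprime (n div g) (K div g)\<close> by (simp add: coprime_dvd_mult_left_iff)
  finally show ?thesis
    unfolding g_def .
qed

text \<open>If \<open>B(y, -) = K f\<close> where the values of \<open>f\<close> have no common divisor, then
  \<open>m y \<in> Y\<^sub>Q\<^sub>,\<^sub>n\<close> exactly when \<open>n\<close> divides \<open>m K\<close>.\<close>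
lemma tn_cor_eq_div_gcd:
  fixes y :: "int ^ 'd"
  assumes quadratic: "quadratic_form Q" and n: "n \<ge> 1" and y: "y \<noteq> 0"
    and BQ_y: "\<And>z. BQ Q y z = K * f z"
    and coprime: "coprime (f z1) (f z2)"
  shows "tn_cor Q n y = nat (int n div gcd (int n) K)"
proof (rule tn_cor_eqI[OF y])
  have "int n div gcd (int n) K > 0"
    using n by (simp add: pos_imp_zdiv_pos_iff)
  then show "nat (int n div gcd (int n) K) > 0"
    by simp
  fix m :: int
  have "(\<forall>z. int n dvd m * BQ Q y z) \<longleftrightarrow> int n dvd m * K"
  proof
    assume "\<forall>z. int n dvd m * BQ Q y z"
    then have "int n dvd gcd ((m * K) * f z1) ((m * K) * f z2)"
      by (simp add: BQ_y mult.assoc)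
    also have "gcd ((m * K) * f z1) ((m * K) * f z2) = \<bar>m * K\<bar>"
      using gcd_mult_distrib_int[of "m * K" "f z1" "f z2"] coprime by simp
    finally show "int n dvd m * K"
      by simp
  qed (simp add: BQ_y mult.assoc[symmetric])
  also have "\<dots> \<longleftrightarrow> int n div gcd (int n) K dvd m"
    using n by (simp add: dvd_mult_iff_div_gcd_dvd)
  finally show "m *s y \<in> YQn Q n \<longleftrightarrow> int (nat (int n div gcd (int n) K)) dvd m"
    using \<open>int n div gcd (int n) K > 0\<close> smult_mem_YQn_iff[OF quadratic] by simp
qed

lemma tn_cor_eq_div_gcd_even:
  fixes y :: "int ^ 'd"
  assumes quadratic: "quadratic_form Q" and n: "n \<ge> 1" and y: "y \<noteq> 0"
    and BQ_y: "\<And>z. BQ Q y z = K * f z"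
    and even: "\<And>z. even (f z)" and two: "f w = 2"
  shows "tn_cor Q n y = nat (int n div gcd (int n) (2 * K))"
proof (rule tn_cor_eq_div_gcd[OF quadratic n y])
  show "BQ Q y z = (2 * K) * (f z div 2)" for z
    using BQ_y[of z] even[of z] by auto
  show "coprime (f w div 2) (f w div 2)"
    using two by simp
qed

section \<open>Coefficient vectors of the positive roots and coroots of \<open>C\<^sub>r\<close>\<close>

text \<open>\<open>PhiI\<close> and \<open>CoPhiII\<close> consist of the same coefficient vectors.\<close>
definition seg_vec :: "nat \<Rightarrow> nat \<Rightarrow> nat \<Rightarrow> int" where
  "seg_vec i j = (\<lambda>k. if i \<le> k \<and> k < j then 1 else 0)"

definition root_vec_II :: "nat \<Rightarrow> nat \<Rightarrow> nat \<Rightarrow> nat \<Rightarrow> int" where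
  "root_vec_II r i j = (\<lambda>k. if i \<le> k \<and> k < j then 1 else if j \<le> k \<and> k < r then 2
      else if k = r then 1 else 0)"

definition root_vec_III :: "nat \<Rightarrow> nat \<Rightarrow> nat \<Rightarrow> int" where
  "root_vec_III r i = (\<lambda>k. if i \<le> k \<and> k < r then 2 else if k = r then 1 else 0)"

definition coroot_vec_I :: "nat \<Rightarrow> nat \<Rightarrow> nat \<Rightarrow> int" where
  "coroot_vec_I r i = (\<lambda>k. if i \<le> k \<and> k \<le> r then 1 else 0)"

definition coroot_vec_III :: "nat \<Rightarrow> nat \<Rightarrow> nat \<Rightarrow> nat \<Rightarrow> int" where
  "coroot_vec_III r i j = (\<lambda>k. if i \<le> k \<and> k < j then 1 else if j \<le> k \<and> k \<le> r then 2 else 0)"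

definition index_pairs :: "nat \<Rightarrow> (nat \<times> nat) set" where
  "index_pairs r = {(i, j). 1 \<le> i \<and> i < j \<and> j \<le> r}"

lemma PhiI_eq_image: "PhiI r = (\<lambda>(i, j). seg_vec i j) ` index_pairs r"
  unfolding PhiI_def seg_vec_def index_pairs_def by auto

lemma PhiII_eq_image: "PhiII r = (\<lambda>(i, j). root_vec_II r i j) ` index_pairs r"
  unfolding PhiII_def root_vec_II_def index_pairs_def by auto

lemma PhiIII_eq_image: "PhiIII r = root_vec_III r ` {1..r}"
  unfolding PhiIII_def root_vec_III_def by auto

lemma CoPhiI_eq_image: "CoPhiI r = coroot_vec_I r ` {1..r}"
  unfolding CoPhiI_def coroot_vec_I_def by auto

lemma CoPhiII_eq_image: "CoPhiII r = (\<lambda>(i, j). seg_vec i j) ` index_pairs r"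
  unfolding CoPhiII_def seg_vec_def index_pairs_def by auto

lemma CoPhiIII_eq_image: "CoPhiIII r = (\<lambda>(i, j). coroot_vec_III r i j) ` index_pairs r"
  unfolding CoPhiIII_def coroot_vec_III_def index_pairs_def by auto

lemma root_vec_II_eq_seg_vec:
  "j \<le> r \<Longrightarrow> root_vec_II r i j k = seg_vec i j k + 2 * seg_vec j r k + seg_vec r (Suc r) k"
  unfolding root_vec_II_def seg_vec_def by auto

lemma root_vec_III_eq_seg_vec:
  "root_vec_III r i k = 2 * seg_vec i r k + seg_vec r (Suc r) k"
  unfolding root_vec_III_def seg_vec_def by auto

lemma coroot_vec_I_eq_seg_vec: "coroot_vec_I r i k = seg_vec i (Suc r) k"
  unfolding coroot_vec_I_def seg_vec_def by auto

lemma coroot_vec_III_eq_seg_vec: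
  "coroot_vec_III r i j k = seg_vec i j k + 2 * seg_vec j (Suc r) k"
  unfolding coroot_vec_III_def seg_vec_def by auto

lemma sum_seg_vec:
  assumes "1 \<le> i" "i \<le> j" "j \<le> Suc r"
  shows "(\<Sum>k\<in>{1..r}. seg_vec i j k) = int j - int i"
proof -
  have "{1..r} \<inter> {k. i \<le> k \<and> k < j} = {i..<j}"
    using assms by auto
  then show ?thesis
    using assms by (simp add: seg_vec_def sum.If_cases of_nat_diff)
qed

lemma sum_root_vec_II:
  "1 \<le> i \<Longrightarrow> i < j \<Longrightarrow> j \<le> r \<Longrightarrow> (\<Sum>k\<in>{1..r}. root_vec_II r i j k) = 2 * int r - int i - int j + 1"
  using sum_seg_vec[of i j r] sum_seg_vec[of j r r] sum_seg_vec[of r "Suc r" r]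
  by (simp add: root_vec_II_eq_seg_vec sum.distrib sum_distrib_left[symmetric])

lemma sum_root_vec_III:
  "1 \<le> i \<Longrightarrow> i \<le> r \<Longrightarrow> (\<Sum>k\<in>{1..r}. root_vec_III r i k) = 2 * (int r - int i) + 1"
  using sum_seg_vec[of i r r] sum_seg_vec[of r "Suc r" r]
  by (simp add: root_vec_III_eq_seg_vec sum.distrib sum_distrib_left[symmetric])

lemma sum_coroot_vec_I:
  "1 \<le> i \<Longrightarrow> i \<le> r \<Longrightarrow> (\<Sum>k\<in>{1..r}. coroot_vec_I r i k) = int r - int i + 1"
  using sum_seg_vec[of i "Suc r" r] by (simp add: coroot_vec_I_eq_seg_vec)

lemma sum_coroot_vec_III:
  "1 \<le> i \<Longrightarrow> i < j \<Longrightarrow> j \<le> r \<Longrightarrow> (\<Sum>k\<in>{1..r}. coroot_vec_III r i j k) = 2 * int r - int i - int j + 2"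
  using sum_seg_vec[of i j r] sum_seg_vec[of j "Suc r" r]
  by (simp add: coroot_vec_III_eq_seg_vec sum.distrib sum_distrib_left[symmetric])

lemma seg_vec_notin_PhiIII: "j \<le> r \<Longrightarrow> seg_vec i j \<notin> PhiIII r"
  unfolding PhiIII_def seg_vec_def by (auto simp: fun_eq_iff)

lemma root_vec_II_notin_PhiIII:
  assumes "1 \<le> i" "i < j" "j \<le> r"
  shows "root_vec_II r i j \<notin> PhiIII r"
proof
  assume "root_vec_II r i j \<in> PhiIII r"
  then obtain l where "root_vec_II r i j = root_vec_III r l"
    unfolding PhiIII_eq_image by blast
  then have "root_vec_II r i j i = root_vec_III r l i"
    by simp
  then show False
    using assms by (simp add: root_vec_II_def root_vec_III_def split: if_splits)
qed

lemma coroot_C_seg_vec: "1 \<le> i \<Longrightarrow> j \<le> r \<Longrightarrow> coroot_C r (seg_vec i j) = seg_vec i j"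
  using seg_vec_notin_PhiIII by (auto simp: coroot_C_def seg_vec_def)

lemma coroot_C_root_vec_II:
  "1 \<le> i \<Longrightarrow> i < j \<Longrightarrow> j \<le> r \<Longrightarrow> coroot_C r (root_vec_II r i j) = coroot_vec_III r i j"
  using root_vec_II_notin_PhiIII by (auto simp: coroot_C_def root_vec_II_def coroot_vec_III_def)

lemma coroot_C_root_vec_III:
  "1 \<le> i \<Longrightarrow> i \<le> r \<Longrightarrow> coroot_C r (root_vec_III r i) = coroot_vec_I r i"
  using PhiIII_eq_image[of r] by (auto simp: coroot_C_def root_vec_III_def coroot_vec_I_def)

lemma image_index_pairs_diff: "(\<lambda>(i, j). int j - int i) ` index_pairs r = {1..int r - 1}"
proof (intro set_eqI iffI)
  fix k
  assume "k \<in> {1..int r - 1}"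
  then have "(1, nat (k + 1)) \<in> index_pairs r" "k = int (nat (k + 1)) - int 1"
    by (auto simp: index_pairs_def)
  then show "k \<in> (\<lambda>(i, j). int j - int i) ` index_pairs r"
    by (auto intro!: image_eqI)
qed (auto simp: index_pairs_def)

lemma image_index_pairs_complement_sum:
  "(\<lambda>(i, j). 2 * int r - int i - int j) ` index_pairs r = {1..2 * int r - 3}"
proof (intro set_eqI iffI)
  fix k
  assume k: "k \<in> {1..2 * int r - 3}"
  show "k \<in> (\<lambda>(i, j). 2 * int r - int i - int j) ` index_pairs r"
  proof (cases "k < int r")
    case True
    then have "(nat (int r - k), r) \<in> index_pairs r" "k = 2 * int r - int (nat (int r - k)) - int r"
      using k by (auto simp: index_pairs_def)
    then show ?thesis
      by (auto intro!: image_eqI)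
  next
    case False
    then have "(1, nat (2 * int r - 1 - k)) \<in> index_pairs r"
        "k = 2 * int r - int 1 - int (nat (2 * int r - 1 - k))"
      using k by (auto simp: index_pairs_def)
    then show ?thesis
      by (auto intro!: image_eqI)
  qed
qed (auto simp: index_pairs_def)

lemma image_diff_atLeastAtMost: "(\<lambda>i. int r - int i) ` {1..r} = {0..int r - 1}"
proof (intro set_eqI iffI)
  fix k
  assume "k \<in> {0..int r - 1}"
  then have "nat (int r - k) \<in> {1..r}" "k = int r - int (nat (int r - k))"
    by auto
  then show "k \<in> (\<lambda>i. int r - int i) ` {1..r}"
    by blast
qed auto

lemma image_add_const_atLeastAtMost: "(\<lambda>k::int. k + d) ` {a..b} = {a + d..b + d}"
  using image_add_atLeastAtMost[of d a b] by (simp add: add.commute)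

lemma image_odd_atLeastAtMost: "(\<lambda>k::int. 2 * k + 1) ` {0..m - 1} = {k \<in> {1..2 * m - 1}. odd k}"
  by (auto elim!: oddE intro: image_eqI)

lemma image_even_atLeastAtMost: "(\<lambda>k::int. 2 * k) ` {1..m - 1} = {k \<in> {1..2 * m - 1}. even k}"
  by (auto elim!: evenE intro: image_eqI)

lemma sum_cartan_C_col:
  assumes "j \<in> {1..r}"
  shows "(\<Sum>k\<in>{1..r}. b k * cartan_C r k j)
    = 2 * b j - (if 1 < j then b (j - 1) else 0) - (if j < r then (if j + 1 = r then 2 else 1) * b (j + 1) else 0)"
proof -
  have "(\<Sum>k\<in>{1..r}. b k * cartan_C r k j) = (\<Sum>k\<in>{1..r}. (if k = j then 2 * b k else 0)
      - (if k = j - 1 then b k else 0) - (if k = j + 1 then (if k = r then 2 else 1) * b k else 0))"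
    using assms by (intro sum.cong) (auto simp: cartan_C_def)
  then show ?thesis
    using assms by (auto simp: sum_subtractf)
qed

lemma sum_cartan_C_row:
  assumes "l \<in> {1..r}"
  shows "(\<Sum>k\<in>{1..r}. c k * cartan_C r l k)
    = 2 * c l - (if 1 < l then (if l = r then 2 else 1) * c (l - 1) else 0) - (if l < r then c (l + 1) else 0)"
proof -
  have "(\<Sum>k\<in>{1..r}. c k * cartan_C r l k) = (\<Sum>k\<in>{1..r}. (if k = l then 2 * c k else 0)
      - (if k = l - 1 then (if l = r then 2 else 1) * c k else 0) - (if k = l + 1 then c k else 0))"
    using assms by (intro sum.cong) (auto simp: cartan_C_def)
  then show ?thesis
    using assms by (auto simp: sum_subtractf)
qed

definition rootvec :: "nat \<Rightarrow> (nat \<Rightarrow> int ^ 'd) \<Rightarrow> (nat \<Rightarrow> int) \<Rightarrow> int ^ 'd" where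
  "rootvec r rt b = (\<Sum>k\<in>{1..r}. b k *s rt k)"

section \<open>The quadratic form on the coroots\<close>

locale C_cover =
  fixes Q :: "int ^ 'd \<Rightarrow> int" and n r :: nat and rt cor :: "nat \<Rightarrow> int ^ 'd"
  assumes r_ge_2: "r \<ge> 2" and n_ge_1: "n \<ge> 1"
    and root_datum: "root_datum_C r rt cor"
    and quadratic: "quadratic_form Q"
    and invariant: "weyl_invariant r rt cor Q"
begin

abbreviation q :: int where "q \<equiv> Q (cor r)"

definition n_short :: nat where "n_short = nat (int n div gcd (int n) (2 * q))"

definition n_long :: nat where "n_long = nat (int n div gcd (int n) q)"

abbreviation tn_long :: nat where "tn_long \<equiv> tn_cor Q n (cor r)"

abbreviation f_X :: "(nat \<Rightarrow> int) \<Rightarrow> rat" where "f_X \<equiv> fX Q n r cor"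

abbreviation f_Y :: "(nat \<Rightarrow> int) \<Rightarrow> rat" where "f_Y \<equiv> fY Q n r cor"

lemma n_short_pos: "n_short > 0"
  using n_ge_1 by (simp add: n_short_def pos_imp_zdiv_pos_iff)

lemma pairing_rt_cor: "i \<in> {1..r} \<Longrightarrow> j \<in> {1..r} \<Longrightarrow> pairing (rt i) (cor j) = cartan_C r i j"
  using root_datum unfolding root_datum_C_def by blast

lemma pairing_rt_cor_self: "k \<in> {1..r} \<Longrightarrow> pairing (rt k) (cor k) = 2"
  by (simp add: pairing_rt_cor cartan_C_def)

lemma cor_nonzero: "k \<in> {1..r} \<Longrightarrow> cor k \<noteq> 0"
  by (metis pairing_rt_cor_self pairing_zero_right zero_neq_numeral)

lemma BQ_cor: "k \<in> {1..r} \<Longrightarrow> BQ Q (cor k) z = pairing (rt k) z * Q (cor k)"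
  using invariant pairing_rt_cor_self
  by (intro reflection_invariant_BQ[OF quadratic]) (auto simp: weyl_invariant_def)

lemma cartan_C_mult_Q_cor:
  "k \<in> {1..r} \<Longrightarrow> l \<in> {1..r} \<Longrightarrow> cartan_C r k l * Q (cor k) = cartan_C r l k * Q (cor l)"
  using BQ_cor[of k "cor l"] BQ_cor[of l "cor k"] BQ_commute[of Q "cor k" "cor l"]
  by (simp add: pairing_rt_cor)

lemma Q_cor_short:
  assumes "1 \<le> k" "k < r"
  shows "Q (cor k) = 2 * q"
proof -
  have "k \<le> r - 1"
    using assms by simp
  then show ?thesis
  proof (induction rule: inc_induct)
    case base
    have "cartan_C r (r - 1) r = -1" "cartan_C r r (r - 1) = -2"
      using r_ge_2 by (auto simp: cartan_C_def)
    then show ?case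
      using cartan_C_mult_Q_cor[of "r - 1" r] r_ge_2 by simp
  next
    case (step j)
    have "cartan_C r j (Suc j) = -1" "cartan_C r (Suc j) j = -1"
      using step.hyps by (auto simp: cartan_C_def)
    then show ?case
      using cartan_C_mult_Q_cor[of j "Suc j"] step assms by simp
  qed
qed

lemma Q_cor: "k \<in> {1..r} \<Longrightarrow> Q (cor k) = (if k = r then 1 else 2) * q"
  using Q_cor_short by auto

lemma pairing_rt_corvec:
  "l \<in> {1..r} \<Longrightarrow> pairing (rt l) (corvec r cor c) = (\<Sum>k\<in>{1..r}. c k * cartan_C r l k)"
  unfolding corvec_def by (simp add: pairing_sum_right pairing_smult_right pairing_rt_cor)

lemma pairing_rootvec_cor:
  "j \<in> {1..r} \<Longrightarrow> pairing (rootvec r rt b) (cor j) = (\<Sum>k\<in>{1..r}. b k * cartan_C r k j)"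
  unfolding rootvec_def by (simp add: pairing_sum_left pairing_smult_left pairing_rt_cor)

lemma corvec_nonzero:
  "l \<in> {1..r} \<Longrightarrow> (\<Sum>k\<in>{1..r}. c k * cartan_C r l k) \<noteq> 0 \<Longrightarrow> corvec r cor c \<noteq> 0"
  by (metis pairing_rt_corvec pairing_zero_right)

text \<open>The coefficient condition says that \<open>corvec r cor c\<close> is the coroot of the root
  \<open>rootvec r rt b\<close>, with \<open>m = 2\<close> for short and \<open>m = 1\<close> for long roots.\<close>
lemma BQ_corvec:
  assumes coeff: "\<And>k. k \<in> {1..r} \<Longrightarrow> c k * (if k = r then 1 else 2) = m * b k"
  shows "BQ Q (corvec r cor c) z = m * q * pairing (rootvec r rt b) z"
proof -
  have "BQ Q (corvec r cor c) z = (\<Sum>k\<in>{1..r}. c k * (pairing (rt k) z * Q (cor k)))"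
    unfolding corvec_def by (simp add: BQ_sum_left[OF quadratic] BQ_smult_left[OF quadratic] BQ_cor)
  also have "\<dots> = (\<Sum>k\<in>{1..r}. m * q * (b k * pairing (rt k) z))"
  proof (rule sum.cong[OF refl])
    fix k
    assume k: "k \<in> {1..r}"
    have "c k * (pairing (rt k) z * Q (cor k)) = (c k * (if k = r then 1 else 2)) * q * pairing (rt k) z"
      using Q_cor[OF k] by (simp only: mult_ac)
    then show "c k * (pairing (rt k) z * Q (cor k)) = m * q * (b k * pairing (rt k) z)"
      using coeff[OF k] by (simp only: mult_ac)
  qed
  also have "\<dots> = m * q * pairing (rootvec r rt b) z"
    unfolding rootvec_def by (simp add: pairing_sum_left pairing_smult_left sum_distrib_left)
  finally show ?thesis .
qed

lemma tn_cor_simple_short: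
  assumes "1 \<le> i" "i < r"
  shows "tn_cor Q n (cor i) = n_short"
proof -
  have i: "i \<in> {1..r}" "Suc i \<in> {1..r}"
    using assms by auto
  have "pairing (rt i) (cor i) = 2" "pairing (rt i) (cor (Suc i)) = -1"
    using assms by (simp_all add: pairing_rt_cor[OF i(1)] i cartan_C_def)
  then have coprime: "coprime (pairing (rt i) (cor i)) (pairing (rt i) (cor (Suc i)))"
    by simp
  show ?thesis
    unfolding n_short_def
    by (rule tn_cor_eq_div_gcd[OF quadratic n_ge_1 cor_nonzero[OF i(1)] _ coprime])
      (simp add: BQ_cor[OF i(1)] Q_cor_short[OF assms])
qed

text \<open>For a long root the form \<open>\<langle>\<beta>, -\<rangle>\<close> takes the value \<open>2\<close> at \<open>\<beta>\<^sup>\<or>\<close> and is congruent to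
  \<open>\<langle>\<alpha>\<^sub>r, -\<rangle>\<close> modulo \<open>2\<close>, so the answer only depends on whether \<open>\<langle>\<alpha>\<^sub>r, Y\<rangle> \<subseteq> 2\<int>\<close>.\<close>
lemma tn_cor_long:
  assumes y: "y \<noteq> 0" and BQ_y: "\<And>z. BQ Q y z = q * f z" and two: "f w = 2"
    and parity: "\<And>z. even (f z - pairing (rt r) z)"
  shows "tn_cor Q n y = (if \<exists>z. odd (pairing (rt r) z) then n_long else n_short)"
proof (cases "\<exists>z. odd (pairing (rt r) z)")
  case True
  then obtain z1 where "odd (pairing (rt r) z1)"
    by blast
  then have "odd (f z1)"
    using parity[of z1] by auto
  then have "coprime (f w) (f z1)"
    using two by simp
  then show ?thesis
    using True tn_cor_eq_div_gcd[OF quadratic n_ge_1 y BQ_y] by (simp add: n_long_def)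
next
  case False
  then have "even (f z)" for z
    using parity[of z] by auto
  then show ?thesis
    using False tn_cor_eq_div_gcd_even[OF quadratic n_ge_1 y BQ_y _ two] by (simp add: n_short_def)
qed

lemma tn_long_eq: "tn_long = (if \<exists>z. odd (pairing (rt r) z) then n_long else n_short)"
  using r_ge_2 cor_nonzero[of r] pairing_rt_cor_self[of r]
  by (intro tn_cor_long[of _ "pairing (rt r)" "cor r"]) (auto simp: BQ_cor mult.commute)

lemma tn_cor_short_root:
  assumes coeff: "\<And>k. k \<in> {1..r} \<Longrightarrow> c k * (if k = r then 1 else 2) = 2 * b k"
    and j: "j \<in> {1..r}"
    and row: "(\<Sum>k\<in>{1..r}. c k * cartan_C r j k) \<noteq> 0"
    and col: "\<bar>\<Sum>k\<in>{1..r}. b k * cartan_C r k j\<bar> = 1"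
  shows "tn_cor Q n (corvec r cor c) = n_short"
proof -
  have coprime: "coprime (pairing (rootvec r rt b) (cor j)) (pairing (rootvec r rt b) (cor j))"
    using col by (simp add: pairing_rootvec_cor[OF j])
  show ?thesis
    unfolding n_short_def
    by (rule tn_cor_eq_div_gcd[where f = "pairing (rootvec r rt b)",
          OF quadratic n_ge_1 corvec_nonzero[OF j row] _ coprime])
      (rule BQ_corvec[OF coeff])
qed

lemma tn_cor_long_root:
  assumes coeff: "\<And>k. k \<in> {1..r} \<Longrightarrow> c k * (if k = r then 1 else 2) = b k"
    and j: "j \<in> {1..r}"
    and row: "(\<Sum>k\<in>{1..r}. c k * cartan_C r j k) \<noteq> 0"
    and col: "(\<Sum>k\<in>{1..r}. b k * cartan_C r k j) = 2"
    and even: "\<And>k. k \<in> {1..<r} \<Longrightarrow> even (b k)" and b_r: "b r = 1"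
  shows "tn_cor Q n (corvec r cor c) = tn_long"
proof -
  have parity: "even (pairing (rootvec r rt b) z - pairing (rt r) z)" for z
  proof -
    have "pairing (rootvec r rt b) z = (\<Sum>k\<in>{1..r}. b k * pairing (rt k) z)"
      by (simp add: rootvec_def pairing_sum_left pairing_smult_left)
    also have "\<dots> = (\<Sum>k\<in>{1..r}. (b k - (if k = r then 1 else 0)) * pairing (rt k) z
        + (if k = r then pairing (rt k) z else 0))"
      by (rule sum.cong) (auto simp: algebra_simps)
    finally have "pairing (rootvec r rt b) z - pairing (rt r) z
        = (\<Sum>k\<in>{1..r}. (b k - (if k = r then 1 else 0)) * pairing (rt k) z)"
      using r_ge_2 by (simp add: sum.distrib)
    also have "even \<dots>"
      using even b_r by (intro dvd_sum) auto
    finally show ?thesis .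
  qed
  have "BQ Q (corvec r cor c) z = q * pairing (rootvec r rt b) z" for z
    using BQ_corvec[of c 1 b] coeff by simp
  then show ?thesis
    unfolding tn_long_eq
    by (rule tn_cor_long[where w = "cor j", OF corvec_nonzero[OF j row] _ _ parity])
      (simp only: pairing_rootvec_cor[OF j] col)
qed

lemma tn_cor_seg_vec:
  assumes "1 \<le> i" "i < j" "j \<le> r"
  shows "tn_cor Q n (corvec r cor (seg_vec i j)) = n_short"
  using assms sum_cartan_C_row[of j r "seg_vec i j"] sum_cartan_C_col[of j r "seg_vec i j"]
  by (intro tn_cor_short_root[of _ "seg_vec i j" j]) (auto simp: seg_vec_def)

lemma tn_cor_coroot_vec_III:
  assumes "1 \<le> i" "i < j" "j \<le> r"
  shows "tn_cor Q n (corvec r cor (coroot_vec_III r i j)) = n_short"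
  using assms sum_cartan_C_row[of j r "coroot_vec_III r i j"] sum_cartan_C_col[of j r "root_vec_II r i j"]
  by (intro tn_cor_short_root[of _ "root_vec_II r i j" j])
    (auto simp: coroot_vec_III_def root_vec_II_def)

lemma tn_cor_coroot_vec_I:
  assumes "1 \<le> i" "i \<le> r"
  shows "tn_cor Q n (corvec r cor (coroot_vec_I r i)) = tn_long"
  using assms sum_cartan_C_row[of i r "coroot_vec_I r i"] sum_cartan_C_col[of i r "root_vec_III r i"]
  by (intro tn_cor_long_root[of _ "root_vec_III r i" i])
    (auto simp: coroot_vec_I_def root_vec_III_def)

section \<open>The functions \<open>f\<^sub>X\<close> and \<open>f\<^sub>Y\<close>\<close>

lemma fX_eq:
  "f_X c = of_int ((\<Sum>k\<in>{1..r}. c k) - c r) / of_nat n_short + of_int (c r) / of_nat tn_long"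
proof -
  have U: "{1..r} = insert r {1..<r}"
    using r_ge_2 by auto
  have "f_X c = (\<Sum>k\<in>{1..<r}. of_int (c k) / of_nat n_short) + of_int (c r) / of_nat tn_long"
    unfolding fX_def U by (simp add: tn_cor_simple_short)
  moreover have "(\<Sum>k\<in>{1..r}. c k) - c r = (\<Sum>k\<in>{1..<r}. c k)"
    unfolding U by simp
  ultimately show ?thesis
    by (simp add: sum_divide_distrib)
qed

lemma fX_coroot_vec_I:
  assumes "1 \<le> i" "i \<le> r"
  shows "f_X (coroot_vec_I r i) = of_int (int r - int i) / of_nat n_short + 1 / of_nat tn_long"
proof -
  have "coroot_vec_I r i r = 1"
    using assms by (simp add: coroot_vec_I_def)
  then show ?thesis
    using sum_coroot_vec_I[OF assms] by (simp add: fX_eq)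
qed

lemma fX_seg_vec:
  assumes "1 \<le> i" "i < j" "j \<le> r"
  shows "f_X (seg_vec i j) = of_int (int j - int i) / of_nat n_short"
proof -
  have "seg_vec i j r = 0"
    using assms by (simp add: seg_vec_def)
  then show ?thesis
    using sum_seg_vec[of i j r] assms by (simp add: fX_eq)
qed

lemma fX_coroot_vec_III:
  assumes "1 \<le> i" "i < j" "j \<le> r"
  shows "f_X (coroot_vec_III r i j)
    = of_int (2 * int r - int i - int j) / of_nat n_short + 2 / of_nat tn_long"
proof -
  have "coroot_vec_III r i j r = 2"
    using assms by (simp add: coroot_vec_III_def)
  then show ?thesis
    using sum_coroot_vec_III[OF assms] by (simp add: fX_eq)
qed

lemma fY_seg_vec:
  "1 \<le> i \<Longrightarrow> i < j \<Longrightarrow> j \<le> r \<Longrightarrow> f_Y (seg_vec i j) = of_int (int j - int i) / of_nat n_short"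
  using sum_seg_vec[of i j r] by (simp add: fY_def coroot_C_seg_vec tn_cor_seg_vec)

lemma fY_root_vec_II:
  "1 \<le> i \<Longrightarrow> i < j \<Longrightarrow> j \<le> r \<Longrightarrow>
    f_Y (root_vec_II r i j) = of_int (2 * int r - int i - int j + 1) / of_nat n_short"
  using sum_root_vec_II[of i j r] by (simp add: fY_def coroot_C_root_vec_II tn_cor_coroot_vec_III)

lemma fY_root_vec_III:
  "1 \<le> i \<Longrightarrow> i \<le> r \<Longrightarrow> f_Y (root_vec_III r i) = of_int (2 * (int r - int i) + 1) / of_nat tn_long"
  using sum_root_vec_III[of i r] by (simp add: fY_def coroot_C_root_vec_III tn_cor_coroot_vec_I)

lemma fX_image_CoPhiI:
  "f_X ` CoPhiI r = (\<lambda>k. of_int k / of_nat n_short + 1 / of_nat tn_long) ` {0..int r - 1}"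
  unfolding CoPhiI_eq_image image_diff_atLeastAtMost[symmetric] image_image
  by (rule image_cong) (simp_all add: fX_coroot_vec_I)

lemma fX_image_CoPhiII: "f_X ` CoPhiII r = (\<lambda>k. of_int k / of_nat n_short) ` {1..int r - 1}"
  unfolding CoPhiII_eq_image image_index_pairs_diff[symmetric] image_image
  by (rule image_cong) (auto simp: index_pairs_def fX_seg_vec)

lemma fX_image_CoPhiIII:
  "f_X ` CoPhiIII r = (\<lambda>k. of_int k / of_nat n_short + 2 / of_nat tn_long) ` {1..2 * int r - 3}"
  unfolding CoPhiIII_eq_image image_index_pairs_complement_sum[symmetric] image_image
  by (rule image_cong) (auto simp: index_pairs_def fX_coroot_vec_III)

lemma fY_image_PhiI: "f_Y ` PhiI r = (\<lambda>k. of_int k / of_nat n_short) ` {1..int r - 1}"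
  unfolding PhiI_eq_image image_index_pairs_diff[symmetric] image_image
  by (rule image_cong) (auto simp: index_pairs_def fY_seg_vec)

lemma fY_image_PhiII: "f_Y ` PhiII r = (\<lambda>k. of_int k / of_nat n_short) ` {2..2 * int r - 2}"
proof -
  have "f_Y ` PhiII r = (\<lambda>k. of_int k / of_nat n_short) ` (\<lambda>k. k + 1)
      ` (\<lambda>(i, j). 2 * int r - int i - int j) ` index_pairs r"
    unfolding PhiII_eq_image image_image
    by (rule image_cong) (auto simp: index_pairs_def fY_root_vec_II)
  then show ?thesis
    unfolding image_index_pairs_complement_sum image_add_const_atLeastAtMost by simp
qed

lemma fY_image_PhiIII:
  "f_Y ` PhiIII r = (\<lambda>k. of_int (2 * k + 1) / of_nat tn_long) ` {0..int r - 1}"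
  unfolding PhiIII_eq_image image_diff_atLeastAtMost[symmetric] image_image
  by (rule image_cong) (simp_all add: fY_root_vec_III)

lemma fX_image_CoPhiII_eq_fY_image_PhiI: "f_X ` CoPhiII r = f_Y ` PhiI r"
  by (simp only: fX_image_CoPhiII fY_image_PhiI)

lemma n_cor_simple: "i \<in> {1..r} \<Longrightarrow> n_cor Q n (cor i) = (if i = r then n_long else n_short)"
  by (auto simp: n_cor_def n_short_def n_long_def Q_cor_short)

lemma tn_long_eq_n_long_if_double: "tn_long = 2 * n_short \<Longrightarrow> tn_long = n_long"
  using tn_long_eq n_short_pos by (auto split: if_splits)

lemma images_if_tn_long_double:
  assumes double: "tn_long = 2 * n_short"
  shows "f_X ` CoPhiI r = f_Y ` PhiIII r"
    and "f_X ` CoPhiIII r = f_Y ` PhiII r"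
    and "f_X ` CoPhiPos r = (\<lambda>k. of_int k / of_nat (2 * n_short)) ` {1..2 * int r - 1}
      \<union> (\<lambda>k. of_int k / of_nat n_short) ` {2..2 * int r - 2}"
    and "f_Y ` PhiPos r = f_X ` CoPhiPos r"
proof -
  have N: "(of_nat n_short :: rat) > 0"
    using n_short_pos by simp
  define h :: "int \<Rightarrow> rat" where "h k = of_int k / of_nat (2 * n_short)" for k
  have I: "f_X ` CoPhiI r = h ` {k \<in> {1..2 * int r - 1}. odd k}"
    unfolding fX_image_CoPhiI image_odd_atLeastAtMost[symmetric] image_image
    by (rule image_cong) (use N in \<open>simp_all add: h_def double field_simps\<close>)
  moreover have "f_Y ` PhiIII r = h ` {k \<in> {1..2 * int r - 1}. odd k}"
    unfolding fY_image_PhiIII image_odd_atLeastAtMost[symmetric] image_image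
    by (rule image_cong) (simp_all add: h_def double)
  ultimately show I_eq: "f_X ` CoPhiI r = f_Y ` PhiIII r"
    by simp
  have "f_X ` CoPhiIII r = (\<lambda>k. of_int k / of_nat n_short) ` (\<lambda>k. k + 1) ` {1..2 * int r - 3}"
    unfolding fX_image_CoPhiIII image_image
    by (rule image_cong) (use N in \<open>simp_all add: double field_simps\<close>)
  then show III_eq: "f_X ` CoPhiIII r = f_Y ` PhiII r"
    unfolding fY_image_PhiII image_add_const_atLeastAtMost by simp
  have II: "f_X ` CoPhiII r = h ` {k \<in> {1..2 * int r - 1}. even k}"
    unfolding fX_image_CoPhiII image_even_atLeastAtMost[symmetric] image_image
    by (rule image_cong) (use N in \<open>simp_all add: h_def field_simps\<close>)
  have "f_X ` CoPhiPos r
      = h ` ({k \<in> {1..2 * int r - 1}. odd k} \<union> {k \<in> {1..2 * int r - 1}. even k}) \<union> f_Y ` PhiII r"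
    unfolding CoPhiPos_def image_Un I II III_eq ..
  also have "{k \<in> {1..2 * int r - 1}. odd k} \<union> {k \<in> {1..2 * int r - 1}. even k} = {1..2 * int r - 1}"
    by auto
  finally show "f_X ` CoPhiPos r = (\<lambda>k. of_int k / of_nat (2 * n_short)) ` {1..2 * int r - 1}
      \<union> (\<lambda>k. of_int k / of_nat n_short) ` {2..2 * int r - 2}"
    unfolding h_def fY_image_PhiII .
  show "f_Y ` PhiPos r = f_X ` CoPhiPos r"
    unfolding PhiPos_def CoPhiPos_def image_Un I_eq III_eq fX_image_CoPhiII_eq_fY_image_PhiI
    by blast
qed

lemma images_if_tn_long_eq:
  assumes same: "tn_long = n_short"
  shows "f_X ` CoPhiPos r = (\<lambda>k. of_int k / of_nat n_short) ` {1..2 * int r - 1}"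
    and "f_Y ` PhiPos r = (\<lambda>k. of_int k / of_nat n_short) ` {1..2 * int r - 1}"
proof -
  have N: "(of_nat n_short :: rat) > 0"
    using n_short_pos by simp
  define g :: "int \<Rightarrow> rat" where "g k = of_int k / of_nat n_short" for k
  have "f_X ` CoPhiI r = g ` (\<lambda>k. k + 1) ` {0..int r - 1}"
    unfolding fX_image_CoPhiI image_image
    by (rule image_cong) (use N in \<open>simp_all add: g_def same field_simps\<close>)
  moreover have "f_X ` CoPhiIII r = g ` (\<lambda>k. k + 2) ` {1..2 * int r - 3}"
    unfolding fX_image_CoPhiIII image_image
    by (rule image_cong) (use N in \<open>simp_all add: g_def same field_simps\<close>)
  moreover have "{1..int r} \<union> {1..int r - 1} \<union> {3..2 * int r - 1} = {1..2 * int r - 1}"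
    using r_ge_2 by auto
  ultimately show "f_X ` CoPhiPos r = g ` {1..2 * int r - 1}"
    unfolding CoPhiPos_def image_Un fX_image_CoPhiII image_add_const_atLeastAtMost g_def
    by (simp add: image_Un[symmetric])
  have "f_Y ` PhiIII r = g ` {k \<in> {1..2 * int r - 1}. odd k}"
    unfolding fY_image_PhiIII image_odd_atLeastAtMost[symmetric] image_image
    by (rule image_cong) (simp_all add: g_def same)
  moreover have
    "{1..int r - 1} \<union> {2..2 * int r - 2} \<union> {k \<in> {1..2 * int r - 1}. odd k} = {1..2 * int r - 1}"
    by (auto; presburger)
  ultimately show "f_Y ` PhiPos r = g ` {1..2 * int r - 1}"
    unfolding PhiPos_def image_Un fY_image_PhiI fY_image_PhiII g_def
    by (simp add: image_Un[symmetric])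
qed

end

theorem lemma3p3:
  fixes Q :: "int ^ 'd \<Rightarrow> int" and n r :: nat
    and rt cor :: "nat \<Rightarrow> int ^ 'd"
  assumes "r \<ge> 2" and "n \<ge> 1"
    and "root_datum_C r rt cor"
    and "quadratic_form Q"
    and "weyl_invariant r rt cor Q"
  shows
   "((\<forall>i\<in>{1..<r}. 2 * tn_cor Q n (cor i) = tn_cor Q n (cor r)) \<longrightarrow>
       (\<forall>i\<in>{1..r}. tn_cor Q n (cor i) = n_cor Q n (cor i))
     \<and> fX Q n r cor ` CoPhiI r = fY Q n r cor ` PhiIII r
     \<and> fX Q n r cor ` CoPhiII r = fY Q n r cor ` PhiI r
     \<and> fX Q n r cor ` CoPhiIII r = fY Q n r cor ` PhiII r
     \<and> fX Q n r cor ` CoPhiPos r =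
         (\<lambda>k. of_int k / of_nat (2 * n_cor Q n (cor 1))) ` {1..2 * int r - 1}
         \<union> (\<lambda>k. of_int k / of_nat (n_cor Q n (cor 1))) ` {2..2 * int r - 2}
     \<and> fY Q n r cor ` PhiPos r = fX Q n r cor ` CoPhiPos r)
    \<and> ((\<forall>i\<in>{1..r}. tn_cor Q n (cor i) = tn_cor Q n (cor 1)) \<longrightarrow>
       fX Q n r cor ` CoPhiPos r =
         (\<lambda>k. of_int k / of_nat (tn_cor Q n (cor 1))) ` {1..2 * int r - 1}
     \<and> fY Q n r cor ` PhiPos r = fX Q n r cor ` CoPhiPos r)"
proof -
  interpret C_cover Q n r rt cor
    by unfold_locales (rule assms)+
  have tn_simple: "tn_cor Q n (cor i) = (if i = r then tn_long else n_short)" if "i \<in> {1..r}" for i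
    using that tn_cor_simple_short by auto
  have one: "1 \<in> {1..<r}" "1 \<in> {1..r}" "1 \<noteq> r"
    using r_ge_2 by auto
  have n_cor_1: "n_cor Q n (cor 1) = n_short" and tn_cor_1: "tn_cor Q n (cor 1) = n_short"
    using n_cor_simple[OF one(2)] tn_simple[OF one(2)] one(3) by simp_all
  have double: "tn_long = 2 * n_short" if "\<forall>i\<in>{1..<r}. 2 * tn_cor Q n (cor i) = tn_long"
    using that[rule_format, OF one(1)] tn_cor_1 by simp
  have tn_eq_n_cor: "\<forall>i\<in>{1..r}. tn_cor Q n (cor i) = n_cor Q n (cor i)" if "tn_long = 2 * n_short"
    using tn_long_eq_n_long_if_double[OF that] tn_simple n_cor_simple by simp
  have tn_equal: "tn_long = n_short" if "\<forall>i\<in>{1..r}. tn_cor Q n (cor i) = n_short"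
    using that r_ge_2 by simp
  show ?thesis
    unfolding n_cor_1 tn_cor_1
    by (intro conjI impI; (drule double | drule tn_equal))
      (simp_all add: tn_eq_n_cor images_if_tn_long_double fX_image_CoPhiII_eq_fY_image_PhiI
        images_if_tn_long_eq)
qed

end
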